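(* Let $S_5\subseteq(\mathbb C^2)^{\otimes3}$ (three parties, one qubit each) be the 5-dimensional span of $|000\rangle$, $|001\rangle-|100\rangle$, $|110\rangle-|011\rangle$, $|001\rangle+|010\rangle+|100\rangle$, $|110\rangle+|101\rangle+|011\rangle$. Then $S_5$ is locally indistinguishable: no orthonormal basis of $S_5$ is perfectly distinguishable by LOCC.
   Context: "Perfectly distinguishable by LOCC": there is a finite-round protocol, in each round one party performing a local measurement and broadcasting the outcome, that identifies with probability 1 which state of the set was given. *)

theory Defs
  imports Complex_Main
begin

text \<open>Computational basis label
  (a,b,c) with False = 0 and True = 1; a global (unnormalised) state vector of
  (C^2)^{\<otimes>3} is a function from labels to complex amplitudes.\<close>

type_synonym label = "bool \<times> bool \<times> bool"
type_synonym state = "label \<Rightarrow> complex"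
type_synonym local_op = "bool \<Rightarrow> bool \<Rightarrow> complex"  \<comment> \<open>2x2 matrix, entry (row, column)\<close>

definition ket :: "label \<Rightarrow> state" where
  "ket a = (\<lambda>x. if x = a then 1 else 0)"

definition vadd :: "state \<Rightarrow> state \<Rightarrow> state" where
  "vadd v w = (\<lambda>x. v x + w x)"

definition vsub :: "state \<Rightarrow> state \<Rightarrow> state" where
  "vsub v w = (\<lambda>x. v x - w x)"

definition inner :: "state \<Rightarrow> state \<Rightarrow> complex" where
  "inner v w = (\<Sum>x\<in>UNIV. cnj (v x) * w x)"

definition lin_comb :: "(nat \<Rightarrow> complex) \<Rightarrow> (nat \<Rightarrow> state) \<Rightarrow> nat \<Rightarrow> state" where
  "lin_comb c g n = (\<lambda>x. \<Sum>k<n. c k * g k x)"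

definition span_of :: "(nat \<Rightarrow> state) \<Rightarrow> nat \<Rightarrow> state set" where
  "span_of g n = range (\<lambda>c. lin_comb c g n)"

definition orthonormal_basis_of :: "(nat \<Rightarrow> state) \<Rightarrow> nat \<Rightarrow> state set \<Rightarrow> bool" where
  "orthonormal_basis_of b n S \<longleftrightarrow>
     (\<forall>i<n. \<forall>j<n. inner (b i) (b j) = (if i = j then 1 else 0)) \<and> span_of b n = S"

definition gen5 :: "nat \<Rightarrow> state" where
  "gen5 k = (if k = 0 then ket (False, False, False)
     else if k = 1 then vsub (ket (False, False, True)) (ket (True, False, False))
     else if k = 2 then vsub (ket (True, True, False)) (ket (False, True, True))
     else if k = 3 then vadd (vadd (ket (False, False, True)) (ket (False, True, False)))
                             (ket (True, False, False))
     else vadd (vadd (ket (True, True, False)) (ket (True, False, True)))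
               (ket (False, True, True)))"

definition S5 :: "state set" where
  "S5 = span_of gen5 5"

definition apply_local :: "nat \<Rightarrow> local_op \<Rightarrow> state \<Rightarrow> state" where
  "apply_local p A v = (\<lambda>(a, b, c).
     if p = 0 then (\<Sum>y\<in>UNIV. A a y * v (y, b, c))
     else if p = 1 then (\<Sum>y\<in>UNIV. A b y * v (a, y, c))
     else (\<Sum>y\<in>UNIV. A c y * v (a, b, y)))"

text \<open>A local measurement given by Kraus operators A_k (one per outcome):
  sum_k A_k^\<dagger> A_k = I.\<close>
definition kraus_complete :: "local_op list \<Rightarrow> bool" where
  "kraus_complete As \<longleftrightarrow>
     (\<forall>x y. (\<Sum>A\<leftarrow>As. \<Sum>a\<in>UNIV. cnj (A a x) * A a y) = (if x = y then 1 else 0))"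

text \<open>Finite-round LOCC protocol tree: at a node, party p performs a local
  measurement with the listed Kraus operators, broadcasts the outcome, and the
  protocol continues with the subtree for that outcome; a leaf outputs a guess.\<close>
datatype protocol = Leaf nat | Node nat "(local_op \<times> protocol) list"

fun wf_protocol :: "protocol \<Rightarrow> bool" where
  "wf_protocol (Leaf j) = True"
| "wf_protocol (Node p bs) \<longleftrightarrow> p < 3 \<and> kraus_complete (map fst bs) \<and>
     (\<forall>bt \<in> set bs. wf_protocol (snd bt))"

text \<open>Run on the (unnormalised) branch state v when the true index is i: every
  leaf reached with non-zero probability (non-zero branch vector) outputs i.\<close>
fun identifies :: "protocol \<Rightarrow> state \<Rightarrow> nat \<Rightarrow> bool" where
  "identifies (Leaf j) v i \<longleftrightarrow> v = (\<lambda>_. 0) \<or> j = i"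
| "identifies (Node p bs) v i \<longleftrightarrow>
     (\<forall>bt \<in> set bs. identifies (snd bt) (apply_local p (fst bt) v) i)"

definition LOCC_perfectly_distinguishable :: "(nat \<Rightarrow> state) \<Rightarrow> nat \<Rightarrow> bool" where
  "LOCC_perfectly_distinguishable b n \<longleftrightarrow>
     (\<exists>t. wf_protocol t \<and> (\<forall>i<n. identifies t (b i) i))"

end

theory Submission
  imports Defs
begin

(*
  Every finite-round LOCC protocol is in particular a separable
  measurement: unfolding the protocol tree yields a finite list of product
  vectors m_r, each tagged with the guess j_r of the leaf it leads to, with
  sum_r |m_r><m_r| = I, and such that <m_r|v> <> 0 forces the guess j_r
  whenever the protocol identifies v.

  If such a measurement identifies an orthonormal basis b_0..b_{n-1} of a
  subspace S, then every m_r with <m_r|b_i> <> 0 is orthogonal to all other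
  basis vectors, so its rescaling has the same projection onto S as b_i.
  Expanding b_i through the resolution of the identity exhibits b_i as a
  weighted average of product vectors that all project to b_i
  ("product average", defined below).

  For S = S_5 a direct coordinate computation shows that a product average
  lying in S_5 is orthogonal to |001> - |100>.  Since this vector lies in S_5,
  it would then be orthogonal to the whole basis of S_5, hence zero: a
  contradiction.
*)

lemma sum_label: "(\<Sum>x\<in>(UNIV::label set). f x) =
  f (False,False,False) + f (False,False,True) + f (False,True,False) + f (False,True,True) +
  f (True,False,False) + f (True,False,True) + f (True,True,False) + f (True,True,True)"
proof -
  have U: "(UNIV::label set) = {(False,False,False), (False,False,True), (False,True,False),
      (False,True,True), (True,False,False), (True,False,True), (True,True,False), (True,True,True)}"
    by (auto simp: UNIV_bool)
  show ?thesis by (subst U) (simp add: add.assoc)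
qed

lemma sum_bool: "(\<Sum>x\<in>(UNIV::bool set). f x) = f False + f True"
  by (simp add: UNIV_bool)

lemma inner_swap: "inner u v = cnj (inner v u)"
  unfolding inner_def by (simp add: mult.commute)

lemma inner_ket_left: "inner (ket x) v = v x"
proof -
  have "inner (ket x) v = (\<Sum>y\<in>UNIV. if y = x then v y else 0)"
    unfolding inner_def ket_def by (rule sum.cong) auto
  then show ?thesis by simp
qed

lemma inner_lin_comb: "inner m (lin_comb c g n) = (\<Sum>j<n. c j * inner m (g j))"
  unfolding inner_def lin_comb_def
  by (simp add: sum_distrib_left sum.swap[of _ UNIV] algebra_simps)

lemma in_span_self: "i < n \<Longrightarrow> g i \<in> span_of g n"
proof -
  assume i: "i < n"
  have "lin_comb (\<lambda>j. if j = i then 1 else 0) g n = g i"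
  proof
    fix x
    have "(\<Sum>k<n. (if k = i then 1 else 0) * g k x) = (\<Sum>k<n. if k = i then g i x else 0)"
      by (rule sum.cong) auto
    then show "lin_comb (\<lambda>j. if j = i then 1 else 0) g n x = g i x"
      using i by (simp add: lin_comb_def)
  qed
  then show ?thesis unfolding span_of_def by (metis rangeI)
qed

definition product_state :: "state \<Rightarrow> bool" where
  "product_state m \<longleftrightarrow> (\<exists>X Y Z. \<forall>a b c. m (a, b, c) = X a * Y b * Z c)"

lemma product_state_ket: "product_state (ket x)"
proof -
  obtain x1 x2 x3 where x: "x = (x1, x2, x3)" by (cases x) auto
  show ?thesis unfolding product_state_def ket_def x
    by (rule exI[of _ "\<lambda>a. if a = x1 then 1 else 0"], rule exI[of _ "\<lambda>a. if a = x2 then 1 else 0"],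
        rule exI[of _ "\<lambda>a. if a = x3 then 1 else 0"]) auto
qed

lemma product_state_scale: "product_state m \<Longrightarrow> product_state (\<lambda>y. m y / d)"
proof -
  assume "product_state m"
  then obtain X Y Z where m: "\<And>a b c. m (a, b, c) = X a * Y b * Z c"
    unfolding product_state_def by blast
  show ?thesis unfolding product_state_def
    by (intro exI[of _ "\<lambda>a. X a / d"] exI[of _ Y] exI[of _ Z]) (simp add: m)
qed

lemma product_state_apply_local:
  assumes "product_state m" shows "product_state (apply_local p A m)"
proof -
  obtain X Y Z where m: "\<And>a b c. m (a, b, c) = X a * Y b * Z c"
    using assms unfolding product_state_def by blast
  define act where "act W = (\<lambda>a. \<Sum>y\<in>UNIV. A a y * W y)" for W :: "bool \<Rightarrow> complex"
  consider "p = 0" | "p = 1" | "p \<noteq> 0" "p \<noteq> 1" by blast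
  then show ?thesis
  proof cases
    case 1
    then show ?thesis unfolding product_state_def apply_local_def
      by (intro exI[of _ "act X"] exI[of _ Y] exI[of _ Z]) (simp add: act_def m sum_bool algebra_simps)
  next
    case 2
    then show ?thesis unfolding product_state_def apply_local_def
      by (intro exI[of _ X] exI[of _ "act Y"] exI[of _ Z]) (simp add: act_def m sum_bool algebra_simps)
  next
    case 3
    then show ?thesis unfolding product_state_def apply_local_def
      by (intro exI[of _ X] exI[of _ Y] exI[of _ "act Z"]) (simp add: act_def m sum_bool algebra_simps)
  qed
qed

lemma product_state_minors:
  assumes "product_state u"
  shows "u (False,False,False) * u (False,True,True) = u (False,False,True) * u (False,True,False)"
    and "u (False,False,False) * u (True,False,True) = u (False,False,True) * u (True,False,False)"
    and "u (False,False,False) * u (True,True,False) = u (False,True,False) * u (True,False,False)"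
    and "u (False,False,False) * u (False,False,False) * u (True,True,True) =
         u (False,False,True) * u (False,True,False) * u (True,False,False)"
  using assms unfolding product_state_def by (auto simp: algebra_simps)

section \<open>LOCC protocols are separable measurements\<close>

definition adj :: "local_op \<Rightarrow> local_op" where
  "adj A = (\<lambda>a y. cnj (A y a))"

lemma inner_apply_local_adj:
  "p < 3 \<Longrightarrow> inner (apply_local p (adj A) m) v = inner m (apply_local p A v)"
  unfolding inner_def apply_local_def adj_def
  by (auto simp: sum_label sum_bool algebra_simps)

text \<open>Entries of the Gram matrix A^* A of a Kraus operator, and the matrix of the
  sesquilinear form (v, w) with all qubits except that of party p traced out.\<close>
definition kraus_gram :: "local_op \<Rightarrow> bool \<Rightarrow> bool \<Rightarrow> complex" where
  "kraus_gram A y y' = (\<Sum>a\<in>UNIV. cnj (A a y) * A a y')"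

definition local_form :: "nat \<Rightarrow> state \<Rightarrow> state \<Rightarrow> bool \<Rightarrow> bool \<Rightarrow> complex" where
  "local_form p v w y y' = (\<Sum>b\<in>UNIV. \<Sum>c\<in>UNIV. (if p = 0 then cnj (v (y,b,c)) * w (y',b,c)
      else if p = 1 then cnj (v (b,y,c)) * w (b,y',c) else cnj (v (b,c,y)) * w (b,c,y')))"

lemma inner_apply_local: "inner (apply_local p A v) (apply_local p A w) =
   (\<Sum>y\<in>UNIV. \<Sum>y'\<in>UNIV. local_form p v w y y' * kraus_gram A y y')"
  unfolding inner_def apply_local_def local_form_def kraus_gram_def
  by (auto simp: sum_label sum_bool algebra_simps)

lemma local_form_trace: "(\<Sum>y\<in>UNIV. local_form p v w y y) = inner v w"
  unfolding inner_def local_form_def by (auto simp: sum_label sum_bool algebra_simps)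

lemma kraus_complete_inner:
  assumes "kraus_complete As"
  shows "(\<Sum>A\<leftarrow>As. inner (apply_local p A v) (apply_local p A w)) = inner v w"
proof -
  have gram: "(\<Sum>A\<leftarrow>As. kraus_gram A y y') = (if y = y' then 1 else 0)" for y y'
    using assms unfolding kraus_complete_def kraus_gram_def by simp
  have "(\<Sum>A\<leftarrow>As. inner (apply_local p A v) (apply_local p A w)) =
      (\<Sum>y\<in>UNIV. \<Sum>y'\<in>UNIV. local_form p v w y y' * (\<Sum>A\<leftarrow>As. kraus_gram A y y'))"
    by (simp add: inner_apply_local sum_list_sum_nth sum.swap[of _ "{..<length As}"]
        sum_distrib_left atLeast0LessThan)
  also have "\<dots> = inner v w"
    using local_form_trace[of p v w] by (simp add: gram sum_bool)
  finally show ?thesis .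
qed

text \<open>A list of (unnormalised) measurement vectors m, each tagged with a guess j,
  whose rank-one operators |m><m| sum to the identity.\<close>
definition resolves_identity :: "(state \<times> nat) list \<Rightarrow> bool" where
  "resolves_identity ms \<longleftrightarrow> (\<forall>v w. inner v w = (\<Sum>(m, j)\<leftarrow>ms. cnj (inner m v) * inner m w))"

definition labels_sound :: "protocol \<Rightarrow> (state \<times> nat) list \<Rightarrow> bool" where
  "labels_sound t ms \<longleftrightarrow>
     (\<forall>v i. identifies t v i \<longrightarrow> (\<forall>(m, j)\<in>set ms. inner m v \<noteq> 0 \<longrightarrow> j = i))"

definition pull_back :: "nat \<Rightarrow> local_op \<Rightarrow> (state \<times> nat) list \<Rightarrow> (state \<times> nat) list" where
  "pull_back p A ms = map (\<lambda>(m, j). (apply_local p (adj A) m, j)) ms"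

lemma resolves_identity_computational_basis:
  "resolves_identity (map (\<lambda>x. (ket x, j)) Enum.enum)"
proof -
  have "(\<Sum>(m, j)\<leftarrow>map (\<lambda>x. (ket x, j)) Enum.enum. cnj (inner m v) * inner m w) = inner v w" for v w
    by (simp add: comp_def inner_ket_left sum_list_distinct_conv_sum_set[OF enum_distinct] enum_UNIV)
      (simp add: inner_def)
  then show ?thesis unfolding resolves_identity_def by simp
qed

lemma sum_list_map_concat: "sum_list (map g (concat xss)) = (\<Sum>xs\<leftarrow>xss. sum_list (map g xs))"
  by (induction xss) auto

lemma sum_pull_back:
  assumes "p < 3"
  shows "(\<Sum>(m, j)\<leftarrow>pull_back p A ms. cnj (inner m v) * inner m w) =
    (\<Sum>(m, j)\<leftarrow>ms. cnj (inner m (apply_local p A v)) * inner m (apply_local p A w))"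
  unfolding pull_back_def by (simp add: comp_def split_def inner_apply_local_adj[OF assms])

lemma resolves_identity_node:
  assumes p: "p < 3" and kc: "kraus_complete (map fst bs)"
    and sub: "\<And>bt. bt \<in> set bs \<Longrightarrow> resolves_identity (f bt)"
  shows "resolves_identity (concat (map (\<lambda>bt. pull_back p (fst bt) (f bt)) bs))"
  unfolding resolves_identity_def
proof (intro allI)
  fix v w
  let ?term = "\<lambda>(m, j). cnj (inner m v) * inner m w"
  have branch: "inner (apply_local p (fst bt) v) (apply_local p (fst bt) w) =
      sum_list (map ?term (pull_back p (fst bt) (f bt)))" if "bt \<in> set bs" for bt
    using sub[OF that] unfolding resolves_identity_def sum_pull_back[OF p] by blast
  have "inner v w = (\<Sum>bt\<leftarrow>bs. inner (apply_local p (fst bt) v) (apply_local p (fst bt) w))"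
    using kraus_complete_inner[OF kc, of p v w] by (simp add: comp_def)
  also have "\<dots> = (\<Sum>bt\<leftarrow>bs. sum_list (map ?term (pull_back p (fst bt) (f bt))))"
    by (rule arg_cong[where f = sum_list], rule map_cong[OF refl]) (rule branch)
  also have "\<dots> = sum_list (map ?term (concat (map (\<lambda>bt. pull_back p (fst bt) (f bt)) bs)))"
    by (simp add: sum_list_map_concat comp_def)
  finally show "inner v w = sum_list (map ?term (concat (map (\<lambda>bt. pull_back p (fst bt) (f bt)) bs)))" .
qed

lemma labels_sound_node:
  assumes p: "p < 3" and sub: "\<And>bt. bt \<in> set bs \<Longrightarrow> labels_sound (snd bt) (f bt)"
  shows "labels_sound (Node p bs) (concat (map (\<lambda>bt. pull_back p (fst bt) (f bt)) bs))"
  unfolding labels_sound_def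
proof (intro allI impI ballI)
  fix v i mj
  assume id: "identifies (Node p bs) v i"
    and mj: "mj \<in> set (concat (map (\<lambda>bt. pull_back p (fst bt) (f bt)) bs))"
  then obtain bt m j where bt: "bt \<in> set bs" and mf: "(m, j) \<in> set (f bt)"
    and mj_eq: "mj = (apply_local p (adj (fst bt)) m, j)"
    unfolding pull_back_def by auto
  have "identifies (snd bt) (apply_local p (fst bt) v) i" using id bt by auto
  then have "inner m (apply_local p (fst bt) v) \<noteq> 0 \<longrightarrow> j = i"
    using sub[OF bt] mf unfolding labels_sound_def by fastforce
  then show "case mj of (m, j) \<Rightarrow> inner m v \<noteq> 0 \<longrightarrow> j = i"
    using mj_eq inner_apply_local_adj[OF p] by simp
qed

lemma locc_separable_measurement:
  "wf_protocol t \<Longrightarrow> \<exists>ms. resolves_identity ms \<and> (\<forall>(m, j)\<in>set ms. product_state m) \<and> labels_sound t ms"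
proof (induction t)
  case (Leaf j)
  let ?ms = "map (\<lambda>x. (ket x, j)) Enum.enum"
  have "labels_sound (Leaf j) ?ms"
    unfolding labels_sound_def by (auto simp: inner_def)
  moreover have "\<forall>(m, j')\<in>set ?ms. product_state m" by (auto simp: product_state_ket)
  ultimately show ?case using resolves_identity_computational_basis by blast
next
  case (Node p bs)
  have "\<forall>bt\<in>set bs. \<exists>ms. resolves_identity ms \<and> (\<forall>(m, j)\<in>set ms. product_state m) \<and> labels_sound (snd bt) ms"
  proof
    fix bt assume bt: "bt \<in> set bs"
    then have "wf_protocol (snd bt)" using Node.prems by simp
    then show "\<exists>ms. resolves_identity ms \<and> (\<forall>(m, j)\<in>set ms. product_state m) \<and> labels_sound (snd bt) ms"
      using Node.IH[OF bt] by (cases bt) simp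
  qed
  then obtain f where f: "\<And>bt. bt \<in> set bs \<Longrightarrow> resolves_identity (f bt) \<and>
      (\<forall>(m, j)\<in>set (f bt). product_state m) \<and> labels_sound (snd bt) (f bt)"
    by metis
  have p: "p < 3" and kc: "kraus_complete (map fst bs)" using Node.prems by auto
  have "\<forall>(m, j)\<in>set (concat (map (\<lambda>bt. pull_back p (fst bt) (f bt)) bs)). product_state m"
    using f unfolding pull_back_def by (fastforce intro: product_state_apply_local)
  then show ?case
    using resolves_identity_node[OF p kc] labels_sound_node[OF p] f by blast
qed

section \<open>Perfect discrimination of a basis yields product averages\<close>

definition product_average :: "state \<Rightarrow> state set \<Rightarrow> bool" where
  "product_average v S \<longleftrightarrow> (\<exists>(I :: nat set) w nn. (\<Sum>r\<in>I. w r) \<noteq> 0 \<and>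
     (\<forall>x. v x = (\<Sum>r\<in>I. w r * nn r x)) \<and>
     (\<forall>r\<in>I. w r \<noteq> 0 \<longrightarrow> product_state (nn r) \<and> (\<forall>s\<in>S. inner s (nn r) = inner s v)))"

lemma inner_span_exclusive:
  assumes orth: "\<And>i j. i < n \<Longrightarrow> j < n \<Longrightarrow> inner (b i) (b j) = (if i = j then 1 else 0)"
    and i: "i < n" and excl: "\<And>j. j < n \<Longrightarrow> j \<noteq> i \<Longrightarrow> inner m (b j) = 0"
    and s: "s \<in> span_of b n"
  shows "inner s m = inner s (b i) * cnj (inner m (b i))"
proof -
  obtain c where s: "s = lin_comb c b n" using s unfolding span_of_def by auto
  have "inner m s = (\<Sum>j<n. if j = i then c i * inner m (b i) else 0)"
    unfolding s inner_lin_comb by (rule sum.cong) (auto simp: excl)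
  then have m_s: "inner m s = c i * inner m (b i)" using i by simp
  have "inner (b i) s = (\<Sum>j<n. if j = i then c i else 0)"
    unfolding s inner_lin_comb by (rule sum.cong) (auto simp: orth i)
  then have b_s: "inner (b i) s = c i" using i by simp
  show ?thesis using m_s b_s inner_swap[of s m] inner_swap[of s "b i"] by simp
qed

lemma sum_list_pairs_nth: "(\<Sum>(m, j)\<leftarrow>ms. g m) = (\<Sum>r<length ms. g (fst (ms ! r)))"
  by (simp add: sum_list_sum_nth atLeast0LessThan split_def)

lemma resolution_expansion:
  assumes "resolves_identity ms"
  shows "v y = (\<Sum>r<length ms. fst (ms ! r) y * inner (fst (ms ! r)) v)"
    and "inner v v = (\<Sum>r<length ms. cnj (inner (fst (ms ! r)) v) * inner (fst (ms ! r)) v)"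
proof -
  have ket_right: "cnj (inner m (ket y)) = m y" for m
    using inner_swap[of m "ket y"] by (simp add: inner_ket_left)
  have "v y = inner (ket y) v" by (simp add: inner_ket_left)
  also have "\<dots> = (\<Sum>(m, j)\<leftarrow>ms. cnj (inner m (ket y)) * inner m v)"
    using assms unfolding resolves_identity_def by blast
  finally show "v y = (\<Sum>r<length ms. fst (ms ! r) y * inner (fst (ms ! r)) v)"
    unfolding sum_list_pairs_nth ket_right .
  show "inner v v = (\<Sum>r<length ms. cnj (inner (fst (ms ! r)) v) * inner (fst (ms ! r)) v)"
    using assms unfolding resolves_identity_def sum_list_pairs_nth by blast
qed

lemma identified_basis_product_average:
  assumes t: "wf_protocol t"
    and orth: "\<And>i j. i < n \<Longrightarrow> j < n \<Longrightarrow> inner (b i) (b j) = (if i = j then 1 else 0)"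
    and identified: "\<And>i. i < n \<Longrightarrow> identifies t (b i) i"
    and i: "i < n"
  shows "product_average (b i) (span_of b n)"
proof -
  obtain ms where res: "resolves_identity ms" and prod: "\<forall>(m, j)\<in>set ms. product_state m"
    and sound: "labels_sound t ms"
    using locc_separable_measurement[OF t] by blast
  define mu where "mu r = inner (fst (ms ! r)) (b i)" for r
  define w where "w r = cnj (mu r) * mu r" for r
  define nn where "nn r = (\<lambda>y. fst (ms ! r) y / cnj (mu r))" for r
  have "(\<Sum>r<length ms. w r) = inner (b i) (b i)"
    unfolding w_def mu_def resolution_expansion(2)[OF res] ..
  then have total: "(\<Sum>r<length ms. w r) \<noteq> 0" using orth[OF i i] by simp
  have average: "b i y = (\<Sum>r<length ms. w r * nn r y)" for y
    unfolding resolution_expansion(1)[OF res, of "b i" y]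
    by (rule sum.cong) (auto simp: w_def nn_def mu_def)
  have component: "product_state (nn r) \<and> (\<forall>s\<in>span_of b n. inner s (nn r) = inner s (b i))"
    if r: "r < length ms" and wr: "w r \<noteq> 0" for r
  proof -
    obtain m j where mj: "ms ! r = (m, j)" by (cases "ms ! r")
    have in_ms: "(m, j) \<in> set ms" using r mj nth_mem by metis
    have mu: "mu r = inner m (b i)" "mu r \<noteq> 0" using wr by (auto simp: mu_def w_def mj)
    have "j = i" using sound identified[OF i] in_ms mu unfolding labels_sound_def by fastforce
    have excl: "inner m (b j') = 0" if "j' < n" "j' \<noteq> i" for j'
      using sound identified[OF that(1)] in_ms \<open>j = i\<close> that(2)
      unfolding labels_sound_def by fastforce
    have "inner s (nn r) = inner s m / cnj (mu r)" for s
      unfolding nn_def inner_def mj by (simp add: sum_divide_distrib)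
    then have "inner s (nn r) = inner s (b i)" if "s \<in> span_of b n" for s
      using inner_span_exclusive[OF orth i excl that] mu by simp
    moreover have "product_state (nn r)"
      unfolding nn_def using product_state_scale prod in_ms mj by fastforce
    ultimately show ?thesis by blast
  qed
  show ?thesis unfolding product_average_def
    using total average component by (intro exI[of _ "{..<length ms}"] exI[of _ w] exI[of _ nn]) auto
qed

section \<open>Product averages in S_5\<close>

lemma inner_gen5:
  "inner (gen5 0) v = v (False,False,False)"
  "inner (gen5 1) v = v (False,False,True) - v (True,False,False)"
  "inner (gen5 2) v = v (True,True,False) - v (False,True,True)"
  "inner (gen5 3) v = v (False,False,True) + v (False,True,False) + v (True,False,False)"
  unfolding inner_def gen5_def ket_def vadd_def vsub_def by (simp_all add: sum_label)

text \<open>The orthogonal complement of S_5 is spanned by |111>, |001> - 2|010> + |100>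
  and |110> - 2|101> + |011>.\<close>
lemma S5_complement:
  assumes "v \<in> S5"
  shows "v (True,True,True) = 0"
    and "v (False,False,True) - 2 * v (False,True,False) + v (True,False,False) = 0"
    and "v (True,True,False) - 2 * v (True,False,True) + v (False,True,True) = 0"
proof -
  obtain c where v: "v = lin_comb c gen5 5" using assms unfolding S5_def span_of_def by auto
  show "v (True,True,True) = 0"
    and "v (False,False,True) - 2 * v (False,True,False) + v (True,False,False) = 0"
    and "v (True,True,False) - 2 * v (True,False,True) + v (False,True,True) = 0"
    unfolding v lin_comb_def
    by (simp_all add: eval_nat_numeral gen5_def ket_def vadd_def vsub_def algebra_simps)
qed

text \<open>A product vector u with the same projection onto S_5 as v, where v is not
  orthogonal to |001> - |100>, has its |001>, |010>, |100> coordinates fixed by v;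
  hence so are the cubic and quadratic expressions paired with the complement.\<close>
lemma S5_product_component_determined:
  fixes u v :: state and G1 A B C :: complex
  assumes prod: "product_state u" and same: "\<forall>s\<in>S5. inner s u = inner s v"
    and G1_def: "G1 = inner (gen5 1) v" and nz: "G1 \<noteq> 0"
    and B_def: "B = - v (False,False,False) * inner (gen5 2) v / G1"
    and C_def: "C = (inner (gen5 3) v - B + G1) / 2"
    and A_def: "A = (inner (gen5 3) v - B - G1) / 2"
  shows "u (False,True,False) = B" and "u (False,False,True) = C" and "u (True,False,False) = A"
    and "v (False,False,False) * v (False,False,False) * u (True,True,True) = C * B * A"
    and "v (False,False,False) * (u (True,True,False) - 2 * u (True,False,True) + u (False,True,True)) =
         B * A - 2 * C * A + C * B"
proof -
  have gen: "inner (gen5 k) u = inner (gen5 k) v" if "k < 5" for k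
    using same in_span_self[OF that, of gen5] unfolding S5_def by blast
  have e: "u (False,False,False) = v (False,False,False)" using gen[of 0] by (simp add: inner_gen5)
  have g1: "u (False,False,True) - u (True,False,False) = G1"
    using gen[of 1] unfolding G1_def inner_gen5 by simp
  have h1: "u (True,True,False) - u (False,True,True) = inner (gen5 2) v"
    using gen[of 2] unfolding inner_gen5 by simp
  have g2: "u (False,False,True) + u (False,True,False) + u (True,False,False) = inner (gen5 3) v"
    using gen[of 3] unfolding inner_gen5 by simp
  note minors = product_state_minors[OF prod, unfolded e]
  have "u (False,True,False) * G1 =
      v (False,False,False) * u (False,True,True) - v (False,False,False) * u (True,True,False)"
    unfolding g1[symmetric] using minors(1,3) by (simp add: algebra_simps)
  also have "\<dots> = - v (False,False,False) * inner (gen5 2) v"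
    unfolding h1[symmetric] by (simp add: algebra_simps)
  finally show b: "u (False,True,False) = B" unfolding B_def using nz by (simp add: field_simps)
  show c: "u (False,False,True) = C" unfolding C_def using g1 g2 b by (simp add: field_simps)
  show a: "u (True,False,False) = A" unfolding A_def using g1 g2 b by (simp add: field_simps)
  show "v (False,False,False) * v (False,False,False) * u (True,True,True) = C * B * A"
    using minors(4) a b c by simp
  show "v (False,False,False) * (u (True,True,False) - 2 * u (True,False,True) + u (False,True,True)) =
      B * A - 2 * C * A + C * B"
    using minors(1-3) a b c by (simp add: algebra_simps)
qed

lemma complement_constraints_symmetric:
  fixes A B C :: complex
  assumes "C * B * A = 0" "C - 2 * B + A = 0" "B * A - 2 * C * A + C * B = 0"
  shows "C = A"
proof -
  have s: "A + C = 2 * B" using assms(2) by (simp add: algebra_simps)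
  have "B * (A + C) = 2 * C * A" using assms(3) by (simp add: algebra_simps)
  then have bb: "B * B = C * A" using s by (simp add: algebra_simps)
  then have "B * B * B = 0" using assms(1) by (metis mult.commute mult.left_commute)
  then have "B = 0" by simp
  then have "C * A = 0" "A = - C" using bb s by (auto simp: algebra_simps)
  then show ?thesis by auto
qed

lemma weighted_sum_const:
  fixes w :: "'i \<Rightarrow> 'a :: comm_ring"
  assumes "\<And>r. r \<in> I \<Longrightarrow> w r \<noteq> 0 \<Longrightarrow> f r = c"
  shows "(\<Sum>r\<in>I. w r * f r) = c * (\<Sum>r\<in>I. w r)"
proof -
  have "(\<Sum>r\<in>I. w r * f r) = (\<Sum>r\<in>I. w r * c)"
    by (rule sum.cong) (use assms in force)+
  then show ?thesis by (simp add: sum_distrib_left mult.commute)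
qed

text \<open>Main computation: a product average lying in S_5 is orthogonal to
  |001> - |100>.  Otherwise the coordinates of all components are pinned down, and
  averaging the three complement constraints forces C = A, i.e. orthogonality.\<close>
lemma S5_product_average_orthogonal:
  assumes S: "v \<in> S5" and avg: "product_average v S5"
  shows "inner (gen5 1) v = 0"
proof (rule ccontr)
  define G1 where "G1 = inner (gen5 1) v"
  assume "inner (gen5 1) v \<noteq> 0"
  then have nz: "G1 \<noteq> 0" by (simp add: G1_def)
  obtain I :: "nat set" and w nn where total: "(\<Sum>r\<in>I. w r) \<noteq> 0"
    and v: "\<And>x. v x = (\<Sum>r\<in>I. w r * nn r x)"
    and comp: "\<And>r. r \<in> I \<Longrightarrow> w r \<noteq> 0 \<Longrightarrow>
        product_state (nn r) \<and> (\<forall>s\<in>S5. inner s (nn r) = inner s v)"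
    using avg unfolding product_average_def by blast
  define \<beta> where "\<beta> = v (False,False,False)"
  define B where "B = - \<beta> * inner (gen5 2) v / G1"
  define C where "C = (inner (gen5 3) v - B + G1) / 2"
  define A where "A = (inner (gen5 3) v - B - G1) / 2"
  note row = S5_product_component_determined[OF conjunct1[OF comp] conjunct2[OF comp] G1_def nz
      B_def[unfolded \<beta>_def] C_def A_def, folded \<beta>_def]
  have "(C - 2 * B + A) * (\<Sum>r\<in>I. w r) =
      (\<Sum>r\<in>I. w r * (nn r (False,False,True) - 2 * nn r (False,True,False) + nn r (True,False,False)))"
    by (rule weighted_sum_const[symmetric]) (simp add: row)
  also have "\<dots> = v (False,False,True) - 2 * v (False,True,False) + v (True,False,False)"
    by (simp add: v sum.distrib sum_subtractf sum_distrib_left algebra_simps)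
  finally have quad: "C - 2 * B + A = 0" using S5_complement(2)[OF S] total by simp
  have "C * B * A * (\<Sum>r\<in>I. w r) = (\<Sum>r\<in>I. w r * (\<beta> * \<beta> * nn r (True,True,True)))"
    by (rule weighted_sum_const[symmetric]) (simp add: row)
  also have "\<dots> = \<beta> * \<beta> * v (True,True,True)"
    by (simp add: v sum_distrib_left algebra_simps)
  finally have cubic: "C * B * A = 0" using S5_complement(1)[OF S] total by simp
  have "(B * A - 2 * C * A + C * B) * (\<Sum>r\<in>I. w r) =
      (\<Sum>r\<in>I. w r * (\<beta> * (nn r (True,True,False) - 2 * nn r (True,False,True) + nn r (False,True,True))))"
    by (rule weighted_sum_const[symmetric]) (simp add: row)
  also have "\<dots> = \<beta> * (v (True,True,False) - 2 * v (True,False,True) + v (False,True,True))"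
    by (simp add: v sum.distrib sum_subtractf sum_distrib_left algebra_simps)
  finally have mixed: "B * A - 2 * C * A + C * B = 0" using S5_complement(3)[OF S] total by simp
  have "C = A" using complement_constraints_symmetric[OF cubic quad mixed] .
  then have "G1 = 0" unfolding C_def A_def by (simp add: field_simps)
  then show False using nz by simp
qed

theorem theorem7:
  shows "\<forall>n b. orthonormal_basis_of b n S5 \<longrightarrow> \<not> LOCC_perfectly_distinguishable b n"
proof (intro allI impI notI)
  fix n b
  assume "orthonormal_basis_of b n S5" and "LOCC_perfectly_distinguishable b n"
  then obtain t where t: "wf_protocol t" and identified: "\<And>i. i < n \<Longrightarrow> identifies t (b i) i"
    and orth: "\<And>i j. i < n \<Longrightarrow> j < n \<Longrightarrow> inner (b i) (b j) = (if i = j then 1 else 0)"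
    and span: "span_of b n = S5"
    unfolding orthonormal_basis_of_def LOCC_perfectly_distinguishable_def by blast
  have perp: "inner (gen5 1) (b j) = 0" if j: "j < n" for j
  proof -
    have "b j \<in> S5" using in_span_self[OF j, of b] span by simp
    moreover have "product_average (b j) S5"
      using identified_basis_product_average[OF t orth identified j] span by simp
    ultimately show ?thesis by (rule S5_product_average_orthogonal)
  qed
  have "gen5 1 \<in> span_of b n" using in_span_self[of 1 5 gen5] span unfolding S5_def by simp
  then obtain c where c: "gen5 1 = lin_comb c b n" unfolding span_of_def by auto
  have "inner (gen5 1) (gen5 1) = (\<Sum>j<n. c j * inner (gen5 1) (b j))"
    by (subst (2) c) (rule inner_lin_comb)
  also have "\<dots> = 0" using perp by (intro sum.neutral) simp
  finally have "inner (gen5 1) (gen5 1) = 0" .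
  moreover have "inner (gen5 1) (gen5 1) = 2"
    unfolding inner_gen5 by (simp add: gen5_def ket_def vsub_def)
  ultimately show False by simp
qed

end
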